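(* Let $\rho\in(0,1)$ and $c_A,c_K>0$. There is a constant $c_1>0$, depending only on $A,B,Q,R,\rho,c_A,c_K$ and the dimensions, such that for any $K,K'\in\mathbb{R}^{k\times d}$ with $\|K\|,\|K'\|\le c_K$, $\|A-BK\|,\|A-BK'\|\le c_A$ and $\rho(A-BK),\rho(A-BK')\le\rho$, $$\|\theta_K-\theta_{K'}\|_F\le c_1\|K-K'\|_F.$$
   Context: $A\in\mathbb{R}^{d\times d}$, $B\in\mathbb{R}^{d\times k}$, $Q\in\mathbb{R}^{d\times d}$, $R\in\mathbb{R}^{k\times k}$ symmetric positive definite. $\rho(\cdot)$ is the spectral radius, $\|\cdot\|$ the operator norm. For $\rho(A-BK)<1$, $P_K$ is the solution of $P_K=Q+K^\top RK+(A-BK)^\top P_K(A-BK)$ and $$\theta_K=\begin{bmatrix}Q+A^\top P_KA & A^\top P_KB\\ B^\top P_KA & R+B^\top P_KB\end{bmatrix}.$$ *)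

theory Defs
  imports "HOL-Analysis.Analysis"
begin

definition cmat :: "real^'n^'n \<Rightarrow> complex^'n^'n" where
  "cmat M = (\<chi> i j. complex_of_real (M $ i $ j))"

definition spec_rad :: "real^'n^'n \<Rightarrow> real" where
  "spec_rad M = Sup {cmod l | l. \<exists>v::complex^'n. v \<noteq> 0 \<and> cmat M *v v = l *s v}"

definition opnorm :: "real^'n^'m \<Rightarrow> real" where
  "opnorm M = onorm (\<lambda>x. M *v x)"

text \<open>Frobenius norm; coincides with the built-in norm on real^'n^'m.\<close>
definition frob :: "real^'n^'m \<Rightarrow> real" where
  "frob M = sqrt (\<Sum>i\<in>UNIV. \<Sum>j\<in>UNIV. (M $ i $ j)^2)"

definition sym_pd :: "real^'n^'n \<Rightarrow> bool" where
  "sym_pd M \<longleftrightarrow> transpose M = M \<and> (\<forall>x. x \<noteq> 0 \<longrightarrow> x \<bullet> (M *v x) > 0)"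

text \<open>P_K: the solution of the Lyapunov equation (unique when rho(A-BK) < 1).\<close>
definition P_K :: "real^'d^'d \<Rightarrow> real^'k^'d \<Rightarrow> real^'d^'d \<Rightarrow> real^'k^'k \<Rightarrow> real^'d^'k \<Rightarrow> real^'d^'d" where
  "P_K A B Q R K = (THE P. P = Q + transpose K ** R ** K + transpose (A - B ** K) ** P ** (A - B ** K))"

definition theta :: "real^'d^'d \<Rightarrow> real^'k^'d \<Rightarrow> real^'d^'d \<Rightarrow> real^'k^'k \<Rightarrow> real^'d^'k \<Rightarrow> real^('d+'k)^('d+'k)" where
  "theta A B Q R K = (let P = P_K A B Q R K;
      M11 = Q + transpose A ** P ** A; M12 = transpose A ** P ** B;
      M21 = transpose B ** P ** A; M22 = R + transpose B ** P ** B in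
    (\<chi> i j. case i of
        Inl a \<Rightarrow> (case j of Inl b \<Rightarrow> M11 $ a $ b | Inr b \<Rightarrow> M12 $ a $ b)
      | Inr a \<Rightarrow> (case j of Inl b \<Rightarrow> M21 $ a $ b | Inr b \<Rightarrow> M22 $ a $ b)))"

end

theory Submission
  imports Defs "Jordan_Normal_Form.Spectral_Radius"
begin

text \<open>Everything is measured in the entrywise l1 norm, which is submultiplicative and equivalent
  to the Frobenius and operator norms. If some power of \<open>L = A - BK\<close> has norm at most 1/2,
  the Lyapunov equation \<open>P = E + L\<^sup>T P L\<close> is uniquely solvable with a solution bounded
  linearly in \<open>E\<close>; the difference \<open>P_K - P_K'\<close> solves such an equation with an inhomogeneity
  linear in \<open>K - K'\<close>, and \<open>theta_K - theta_K'\<close> is a congruence of \<open>P_K - P_K'\<close>.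
  A single exponent works for all admissible \<open>K\<close>: the admissible matrices \<open>L\<close> lie in a compact
  set on which the characteristic polynomial has no roots of modulus at least \<open>(1 + rho)/2\<close>,
  each matrix of that set has some contracting power by the Jordan normal form, and contraction
  is an open condition.\<close>

(* The Jordan normal form library's vector indexing would clash with vec_nth. *)
no_notation vec_index (infixl "$" 100)

section \<open>The entrywise l1 norm\<close>

definition l1_norm :: "real^'n^'m \<Rightarrow> real" where
  "l1_norm M = (\<Sum>i\<in>UNIV. \<Sum>j\<in>UNIV. \<bar>M$i$j\<bar>)"

lemma l1_norm_nonneg: "0 \<le> l1_norm M"
  by (simp add: l1_norm_def sum_nonneg)

lemma l1_norm_triangle: "l1_norm (A + B) \<le> l1_norm A + l1_norm B"
  unfolding l1_norm_def sum.distrib[symmetric] by (intro sum_mono) (simp add: abs_triangle_ineq)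

lemma l1_norm_minus: "l1_norm (- A) = l1_norm A"
  by (simp add: l1_norm_def)

lemma l1_norm_scaleR: "l1_norm (c *\<^sub>R A) = \<bar>c\<bar> * l1_norm A"
  by (simp add: l1_norm_def sum_distrib_left abs_mult)

lemma l1_norm_transpose: "l1_norm (transpose A) = l1_norm A"
  unfolding l1_norm_def transpose_def by (simp, rule sum.swap)

lemma l1_norm_eq_0_iff: "l1_norm A = 0 \<longleftrightarrow> A = 0"
  unfolding l1_norm_def
  by (simp add: sum_nonneg_eq_0_iff sum_nonneg Finite_Cartesian_Product.vec_eq_iff)

lemma l1_norm_sum_le: "l1_norm (\<Sum>t\<in>T. f t) \<le> (\<Sum>t\<in>T. l1_norm (f t))"
proof (induction T rule: infinite_finite_induct)
  case (insert x F)
  then show ?case using l1_norm_triangle[of "f x" "\<Sum>t\<in>F. f t"] by simp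
qed (simp_all add: l1_norm_def)

lemma row_sum_le_l1_norm: "(\<Sum>j\<in>UNIV. \<bar>M$i$j\<bar>) \<le> l1_norm M"
  unfolding l1_norm_def by (rule member_le_sum) (auto intro: sum_nonneg)

lemma l1_norm_mult_le: "l1_norm (A ** B) \<le> l1_norm A * l1_norm B"
proof -
  have "l1_norm (A ** B) = (\<Sum>i\<in>UNIV. \<Sum>j\<in>UNIV. \<bar>\<Sum>k\<in>UNIV. A$i$k * B$k$j\<bar>)"
    by (simp add: l1_norm_def matrix_matrix_mult_def)
  also have "\<dots> \<le> (\<Sum>i\<in>UNIV. \<Sum>j\<in>UNIV. \<Sum>k\<in>UNIV. \<bar>A$i$k\<bar> * \<bar>B$k$j\<bar>)"
    by (intro sum_mono, rule order_trans[OF sum_abs], simp add: abs_mult)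
  also have "\<dots> = (\<Sum>i\<in>UNIV. \<Sum>k\<in>UNIV. \<bar>A$i$k\<bar> * (\<Sum>j\<in>UNIV. \<bar>B$k$j\<bar>))"
    by (rule sum.cong[OF refl], subst sum.swap, simp add: sum_distrib_left)
  also have "\<dots> \<le> (\<Sum>i\<in>UNIV. \<Sum>k\<in>UNIV. \<bar>A$i$k\<bar> * l1_norm B)"
    by (intro sum_mono mult_left_mono row_sum_le_l1_norm) auto
  also have "\<dots> = l1_norm A * l1_norm B"
    by (simp add: l1_norm_def sum_distrib_right)
  finally show ?thesis .
qed

lemma l1_norm_congruence_le:
  "l1_norm (transpose X ** Y ** Z) \<le> l1_norm X * l1_norm Y * l1_norm Z"
proof -
  have "l1_norm (transpose X ** Y ** Z) \<le> l1_norm (transpose X ** Y) * l1_norm Z"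
    by (rule l1_norm_mult_le)
  also have "\<dots> \<le> l1_norm X * l1_norm Y * l1_norm Z"
    using l1_norm_mult_le[of "transpose X" Y]
    by (intro mult_right_mono l1_norm_nonneg) (simp add: l1_norm_transpose)
  finally show ?thesis .
qed

lemma frob_eq_norm: "frob M = norm M"
proof -
  have "norm (M$i) ^ 2 = (\<Sum>j\<in>UNIV. (M$i$j)^2)" for i
    unfolding norm_vec_def L2_set_def by (simp add: sum_nonneg)
  then show ?thesis
    unfolding frob_def norm_vec_def L2_set_def by simp
qed

lemma norm_le_l1_norm: "norm M \<le> l1_norm M"
proof -
  have "norm M \<le> (\<Sum>i\<in>UNIV. norm (M$i))"
    unfolding norm_vec_def by (rule L2_set_le_sum) simp
  also have "\<dots> \<le> l1_norm M"
    unfolding l1_norm_def by (intro sum_mono norm_le_l1_cart)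
  finally show ?thesis .
qed

lemma l1_norm_le_entry_bound:
  assumes "\<And>i j. \<bar>(M::real^'n^'m)$i$j\<bar> \<le> c"
  shows "l1_norm M \<le> real CARD('m) * real CARD('n) * c"
proof -
  have "l1_norm M \<le> (\<Sum>i::'m\<in>UNIV. \<Sum>j::'n\<in>UNIV. c)"
    unfolding l1_norm_def using assms by (intro sum_mono) auto
  then show ?thesis by simp
qed

lemma l1_norm_le_norm: "l1_norm (M::real^'n^'m) \<le> real CARD('m) * real CARD('n) * norm M"
  by (rule l1_norm_le_entry_bound)
    (metis component_le_norm_cart Finite_Cartesian_Product.norm_nth_le order_trans)

lemma l1_norm_le_of_opnorm_le:
  "opnorm M \<le> c \<Longrightarrow> l1_norm (M::real^'n^'m) \<le> real CARD('m) * real CARD('n) * c"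
  by (rule l1_norm_le_entry_bound) (metis opnorm_def matrix_component_le_onorm order_trans)

section \<open>Matrix products and powers\<close>

lemma matrix_diff_rdistrib: "((A::real^'n^'m) - B) ** C = A ** C - B ** C"
  by (simp add: matrix_matrix_mult_def Finite_Cartesian_Product.vec_eq_iff
      sum_subtractf[symmetric] left_diff_distrib)

lemma matrix_diff_ldistrib: "(A::real^'n^'m) ** (B - C) = A ** B - A ** C"
  by (simp add: matrix_matrix_mult_def Finite_Cartesian_Product.vec_eq_iff
      sum_subtractf[symmetric] right_diff_distrib)

lemma matrix_add_rdistrib: "((A::real^'n^'m) + B) ** C = A ** C + B ** C"
  by (simp add: matrix_matrix_mult_def Finite_Cartesian_Product.vec_eq_iff sum.distrib distrib_right)

lemma transpose_diff: "transpose (A - B) = transpose A - transpose B"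
  by (simp add: transpose_def Finite_Cartesian_Product.vec_eq_iff)

fun matpow :: "real^'n^'n \<Rightarrow> nat \<Rightarrow> real^'n^'n" where
  "matpow X 0 = Finite_Cartesian_Product.mat 1"
| "matpow X (Suc k) = X ** matpow X k"

lemma matpow_add: "matpow X (a + b) = matpow X a ** matpow X b"
  by (induction a) (auto simp: matrix_mul_assoc)

lemma matpow_mult: "matpow X (a * b) = matpow (matpow X a) b"
  by (induction b) (auto simp: matpow_add)

lemma matpow_Suc_right: "matpow X (Suc k) = matpow X k ** X"
  using matpow_add[of X k 1] by simp

lemma matpow_scaleR: "matpow (c *\<^sub>R X) k = c ^ k *\<^sub>R matpow X k"
  by (induction k) (auto simp: scalar_matrix_assoc matrix_scalar_ac mult.commute)

lemma continuous_on_matpow: "continuous_on UNIV (\<lambda>X::real^'n^'n. matpow X k)"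
proof (induction k)
  case (Suc k)
  have "continuous_on UNIV (\<lambda>X::real^'n^'n. \<chi> i j. \<Sum>m\<in>UNIV. X$i$m * matpow X k $m$j)"
    by (intro continuous_intros Suc continuous_on_id)
  then show ?case by (simp add: matrix_matrix_mult_def)
qed simp

lemma l1_norm_mat_1: "l1_norm (Finite_Cartesian_Product.mat 1 :: real^'n^'n) = real CARD('n)"
proof -
  have "(\<Sum>j\<in>UNIV. \<bar>(Finite_Cartesian_Product.mat 1 :: real^'n^'n)$i$j\<bar>) = 1" for i
    by (simp add: Finite_Cartesian_Product.mat_def if_distrib cong: if_cong)
  then show ?thesis unfolding l1_norm_def by simp
qed

lemma l1_norm_matpow_le: "k \<ge> 1 \<Longrightarrow> l1_norm (matpow X k) \<le> l1_norm X ^ k"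
proof (induction k)
  case (Suc k)
  show ?case
  proof (cases "k = 0")
    case False
    with Suc have "l1_norm X * l1_norm (matpow X k) \<le> l1_norm X * l1_norm X ^ k"
      by (intro mult_left_mono l1_norm_nonneg) simp
    then show ?thesis using l1_norm_mult_le[of X "matpow X k"] by simp
  qed simp
qed simp

lemma l1_norm_matpow_le_card: "l1_norm (matpow (X::real^'n^'n) k) \<le> real CARD('n) * l1_norm X ^ k"
proof (cases "k = 0")
  case False
  then have "l1_norm (matpow X k) \<le> l1_norm X ^ k" by (intro l1_norm_matpow_le) auto
  moreover have "l1_norm X ^ k \<le> real CARD('n) * l1_norm X ^ k"
    using l1_norm_nonneg[of X] by (simp add: mult_le_cancel_right1)
  ultimately show ?thesis by linarith
qed (simp add: l1_norm_mat_1)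

section \<open>The discrete Lyapunov equation\<close>

lemma lyapunov_unfold:
  assumes X: "X = E + transpose L ** X ** L"
  shows "X = (\<Sum>t<m. transpose (matpow L t) ** E ** matpow L t)
              + transpose (matpow L m) ** X ** matpow L m"
proof (induction m)
  case (Suc m)
  have "transpose (matpow L m) ** X ** matpow L m
      = transpose (matpow L m) ** (E + transpose L ** X ** L) ** matpow L m"
    using X by (rule arg_cong)
  also have "\<dots> = transpose (matpow L m) ** E ** matpow L m
      + transpose (matpow L (Suc m)) ** X ** matpow L (Suc m)"
    by (simp add: matrix_add_ldistrib matrix_add_rdistrib matrix_transpose_mul matrix_mul_assoc)
  finally show ?case using Suc by (simp add: add.assoc)
qed simp

lemma lyapunov_l1_bound:
  assumes N: "l1_norm (matpow L N) \<le> 1/2" and X: "X = E + transpose L ** X ** L"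
  shows "l1_norm X \<le> 4/3 * (\<Sum>t<N. l1_norm (matpow L t)^2) * l1_norm E"
proof -
  have "l1_norm X \<le> (\<Sum>t<N. l1_norm (transpose (matpow L t) ** E ** matpow L t))
      + l1_norm (transpose (matpow L N) ** X ** matpow L N)"
    by (subst lyapunov_unfold[OF X, of N])
      (rule order_trans[OF l1_norm_triangle add_right_mono[OF l1_norm_sum_le]])
  also have "\<dots> \<le> (\<Sum>t<N. l1_norm (matpow L t)^2 * l1_norm E) + (1/2)^2 * l1_norm X"
    \<comment> \<open>the remainder is absorbed, whence the factor \<open>4/3 = 1/(1 - (1/2)^2)\<close>\<close>
  proof (intro add_mono sum_mono)
    show "l1_norm (transpose (matpow L t) ** E ** matpow L t) \<le> l1_norm (matpow L t)^2 * l1_norm E"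
      for t using l1_norm_congruence_le[of "matpow L t" E "matpow L t"] by (simp add: power2_eq_square mult_ac)
    have "l1_norm (matpow L N)^2 \<le> (1/2)^2"
      using N by (intro power_mono l1_norm_nonneg)
    then show "l1_norm (transpose (matpow L N) ** X ** matpow L N) \<le> (1/2)^2 * l1_norm X"
      using l1_norm_congruence_le[of "matpow L N" X] l1_norm_nonneg[of X]
      by (smt (verit, best) mult_right_mono power2_eq_square mult.commute mult.left_commute)
  qed
  also have "\<dots> = (\<Sum>t<N. l1_norm (matpow L t)^2) * l1_norm E + 1/4 * l1_norm X"
    by (simp add: sum_distrib_right power_divide)
  finally show ?thesis by linarith
qed

definition lyapunov_gain :: "nat \<Rightarrow> nat \<Rightarrow> real \<Rightarrow> real" where
  "lyapunov_gain n N c = 4/3 * (\<Sum>t<N. (real n * c ^ t)^2)"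

lemma lyapunov_gain_nonneg: "0 \<le> lyapunov_gain n N c"
  by (simp add: lyapunov_gain_def sum_nonneg)

lemma lyapunov_l1_bound_gain:
  assumes N: "l1_norm (matpow L N) \<le> 1/2" and L: "l1_norm (L::real^'n^'n) \<le> c"
    and X: "X = E + transpose L ** X ** L"
  shows "l1_norm X \<le> lyapunov_gain CARD('n) N c * l1_norm E"
proof -
  have "l1_norm (matpow L t) \<le> real CARD('n) * c ^ t" for t
    using l1_norm_matpow_le_card[of L t] power_mono[OF L l1_norm_nonneg, of t]
    by (smt (verit) mult_left_mono of_nat_0_le_iff)
  then have "4/3 * (\<Sum>t<N. l1_norm (matpow L t)^2) \<le> lyapunov_gain CARD('n) N c"
    unfolding lyapunov_gain_def by (intro mult_left_mono sum_mono power_mono l1_norm_nonneg) auto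
  then show ?thesis
    using lyapunov_l1_bound[OF N X] l1_norm_nonneg[of E] by (meson mult_right_mono order_trans)
qed

lemma lyapunov_unique:
  assumes N: "l1_norm (matpow L N) \<le> 1/2"
    and X: "X = E + transpose L ** X ** L" and Y: "Y = E + transpose L ** Y ** L"
  shows "X = Y"
proof -
  have "X - Y = 0 + transpose L ** (X - Y) ** L"
    using X Y by (metis add_diff_cancel_left matrix_diff_ldistrib matrix_diff_rdistrib add_0)
  from lyapunov_l1_bound[OF N this] have "l1_norm (X - Y) \<le> 0"
    by (simp add: l1_norm_def)
  then show ?thesis
    using l1_norm_nonneg[of "X - Y"] l1_norm_eq_0_iff[of "X - Y"] by simp
qed

lemma lyapunov_solvable:
  assumes N: "l1_norm (matpow (L::real^'n^'n) N) \<le> 1/2"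
  shows "\<exists>X. X = E + transpose L ** X ** L"
proof -
  define f where "f X = X - transpose L ** X ** L" for X :: "real^'n^'n"
  have "linear f"
    by (rule linearI) (simp_all add: f_def matrix_add_ldistrib matrix_add_rdistrib
        scalar_matrix_assoc matrix_scalar_ac scaleR_diff_right)
  moreover have "inj f"
  proof (rule injI)
    fix X Y assume eq: "f X = f Y"
    have "X = f X + transpose L ** X ** L" "Y = f Y + transpose L ** Y ** L"
      by (simp_all add: f_def)
    with eq show "X = Y" by (metis lyapunov_unique[OF N])
  qed
  ultimately have "surj f" by (rule linear_injective_imp_surjective) simp
  then obtain X where "f X = E" by (metis surjD)
  then have "X = E + transpose L ** X ** L" by (auto simp: f_def)
  then show ?thesis ..
qed

lemma P_K_fixpoint:
  assumes "l1_norm (matpow (A - B ** K) N) \<le> 1/2"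
  shows "P_K A B Q R K
      = Q + transpose K ** R ** K + transpose (A - B ** K) ** P_K A B Q R K ** (A - B ** K)"
  unfolding P_K_def
  by (rule theI') (use lyapunov_solvable[OF assms] lyapunov_unique[OF assms] in blast)

section \<open>Transfer to the Jordan normal form library\<close>

definition enum_elem :: "nat \<Rightarrow> 'n::finite" where
  "enum_elem = (SOME g. bij_betw g {..<CARD('n)} UNIV)"

definition enum_index :: "'n::finite \<Rightarrow> nat" where
  "enum_index = inv_into {..<CARD('n)} enum_elem"

lemma bij_betw_enum_elem: "bij_betw (enum_elem :: nat \<Rightarrow> 'n::finite) {..<CARD('n)} UNIV"
proof -
  obtain g :: "nat \<Rightarrow> 'n" where "bij_betw g {0..<CARD('n)} UNIV"
    using ex_bij_betw_nat_finite[of "UNIV::'n set"] by auto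
  then have "\<exists>g::nat \<Rightarrow> 'n. bij_betw g {..<CARD('n)} UNIV"
    by (auto simp: atLeast0LessThan)
  then show ?thesis unfolding enum_elem_def by (rule someI_ex)
qed

lemma enum_index_less: "enum_index (u::'n::finite) < CARD('n)"
  using bij_betw_inv_into[OF bij_betw_enum_elem] unfolding enum_index_def
  by (auto dest: bij_betwE)

lemma enum_elem_index [simp]: "enum_elem (enum_index u) = u"
  unfolding enum_index_def using bij_betw_inv_into_right[OF bij_betw_enum_elem] by auto

lemma enum_index_elem: "t < CARD('n) \<Longrightarrow> enum_index (enum_elem t :: 'n::finite) = t"
  unfolding enum_index_def using bij_betw_inv_into_left[OF bij_betw_enum_elem] by auto

lemma enum_elem_eq_iff:
  "a < CARD('n) \<Longrightarrow> b < CARD('n) \<Longrightarrow> (enum_elem a :: 'n::finite) = enum_elem b \<longleftrightarrow> a = b"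
  by (metis enum_index_elem)

lemma sum_enum_elem: "(\<Sum>t\<in>{0..<CARD('n)}. f (enum_elem t :: 'n::finite)) = (\<Sum>u\<in>UNIV. f u)"
  using sum.reindex_bij_betw[OF bij_betw_enum_elem, of f] by (simp add: atLeast0LessThan)

definition jnf_mat :: "real^'n^'n \<Rightarrow> complex mat" where
  "jnf_mat X = Matrix.mat CARD('n) CARD('n)
      (\<lambda>(a, b). complex_of_real (X $ enum_elem a $ enum_elem b))"

lemma jnf_mat_carrier: "jnf_mat (X::real^'n^'n) \<in> carrier_mat CARD('n) CARD('n)"
  by (simp add: jnf_mat_def)

lemma jnf_mat_dim [simp]:
  "dim_row (jnf_mat (X::real^'n^'n)) = CARD('n)" "dim_col (jnf_mat (X::real^'n^'n)) = CARD('n)"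
  by (simp_all add: jnf_mat_def)

lemma jnf_mat_index:
  "a < CARD('n) \<Longrightarrow> b < CARD('n)
    \<Longrightarrow> jnf_mat (X::real^'n^'n) $$ (a, b) = of_real (X $ enum_elem a $ enum_elem b)"
  by (simp add: jnf_mat_def)

lemma jnf_mat_mult: "jnf_mat ((X::real^'n^'n) ** Y) = jnf_mat X * jnf_mat Y"
proof (rule eq_matI)
  fix a b assume "a < dim_row (jnf_mat X * jnf_mat Y)" "b < dim_col (jnf_mat X * jnf_mat Y)"
  then have a: "a < CARD('n)" and b: "b < CARD('n)" by (simp_all add: jnf_mat_def)
  have "(jnf_mat X * jnf_mat Y) $$ (a, b)
      = (\<Sum>t\<in>{0..<CARD('n)}. jnf_mat X $$ (a, t) * jnf_mat Y $$ (t, b))"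
    using a b by (simp add: jnf_mat_def scalar_prod_def)
  also have "\<dots> = (\<Sum>t\<in>{0..<CARD('n)}.
      of_real (X $ enum_elem a $ enum_elem t) * of_real (Y $ enum_elem t $ enum_elem b))"
    using a b by (intro sum.cong) (auto simp: jnf_mat_index)
  also have "\<dots> = (\<Sum>u\<in>UNIV. of_real (X $ enum_elem a $ u) * of_real (Y $ u $ enum_elem b))"
    by (rule sum_enum_elem)
  also have "\<dots> = jnf_mat (X ** Y) $$ (a, b)"
    using a b by (simp add: jnf_mat_index matrix_matrix_mult_def)
  finally show "jnf_mat (X ** Y) $$ (a, b) = (jnf_mat X * jnf_mat Y) $$ (a, b)" ..
qed (simp_all add: jnf_mat_def)

lemma jnf_mat_one: "jnf_mat (Finite_Cartesian_Product.mat 1 :: real^'n^'n) = 1\<^sub>m CARD('n)"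
  by (rule eq_matI) (auto simp: jnf_mat_index Finite_Cartesian_Product.mat_def enum_elem_eq_iff)

lemma jnf_mat_matpow: "jnf_mat (matpow (X::real^'n^'n) k) = jnf_mat X ^\<^sub>m k"
  by (induction k) (simp_all add: jnf_mat_one matpow_Suc_right jnf_mat_mult del: matpow.simps(2))

lemma matpow_entry_eq_jnf:
  "matpow (X::real^'n^'n) k $ u $ u' = Re ((jnf_mat X ^\<^sub>m k) $$ (enum_index u, enum_index u'))"
  by (simp add: jnf_mat_matpow[symmetric] jnf_mat_index enum_index_less)

definition jnf_vec :: "complex^'n \<Rightarrow> complex vec" where
  "jnf_vec v = Matrix.vec CARD('n) (\<lambda>t. v $ enum_elem t)"

lemma jnf_vec_carrier: "jnf_vec (v::complex^'n) \<in> carrier_vec CARD('n)"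
  by (simp add: jnf_vec_def)

lemma jnf_vec_surj:
  "w \<in> carrier_vec CARD('n) \<Longrightarrow> jnf_vec (\<chi> u. vec_index w (enum_index u) :: complex^'n) = w"
  by (auto simp: jnf_vec_def enum_index_elem)

lemma jnf_vec_eq_iff: "jnf_vec v = jnf_vec v' \<longleftrightarrow> v = (v'::complex^'n)"
proof
  have "v $ u = vec_index (jnf_vec v) (enum_index u)" for v :: "complex^'n" and u
    by (simp add: jnf_vec_def enum_index_less)
  then show "jnf_vec v = jnf_vec v' \<Longrightarrow> v = v'"
    by (simp add: Finite_Cartesian_Product.vec_eq_iff)
qed simp

lemma jnf_vec_0: "jnf_vec (0::complex^'n) = 0\<^sub>v CARD('n)"
  by (auto simp: jnf_vec_def)

lemma jnf_vec_smult: "jnf_vec (\<mu> *s v) = \<mu> \<cdot>\<^sub>v jnf_vec v"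
  by (auto simp: jnf_vec_def)

lemma jnf_mat_mult_jnf_vec: "jnf_mat (X::real^'n^'n) *\<^sub>v jnf_vec v = jnf_vec (cmat X *v v)"
proof (rule eq_vecI)
  fix t assume "t < dim_vec (jnf_vec (cmat X *v v))"
  then have t: "t < CARD('n)" by (simp add: jnf_vec_def)
  have "vec_index (jnf_mat X *\<^sub>v jnf_vec v) t
      = (\<Sum>s\<in>{0..<CARD('n)}. of_real (X $ enum_elem t $ enum_elem s) * v $ enum_elem s)"
    using t by (auto simp: scalar_prod_def jnf_mat_def jnf_vec_def intro!: sum.cong)
  also have "\<dots> = (\<Sum>u\<in>UNIV. of_real (X $ enum_elem t $ u) * v $ u)"
    by (rule sum_enum_elem[where f="\<lambda>u. of_real (X $ enum_elem t $ u) * v $ u"])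
  also have "\<dots> = vec_index (jnf_vec (cmat X *v v)) t"
    using t by (simp add: jnf_vec_def cmat_def matrix_vector_mult_def)
  finally show "vec_index (jnf_mat X *\<^sub>v jnf_vec v) t = vec_index (jnf_vec (cmat X *v v)) t" .
qed (simp add: jnf_vec_def)

lemma eigenvalue_jnf_mat_iff:
  "eigenvalue (jnf_mat (X::real^'n^'n)) \<mu> \<longleftrightarrow> (\<exists>v. v \<noteq> 0 \<and> cmat X *v v = \<mu> *s v)"
proof
  assume "eigenvalue (jnf_mat X) \<mu>"
  then obtain w where w: "w \<in> carrier_vec CARD('n)" "w \<noteq> 0\<^sub>v CARD('n)"
      "jnf_mat X *\<^sub>v w = \<mu> \<cdot>\<^sub>v w"
    unfolding eigenvalue_def eigenvector_def by auto
  define v :: "complex^'n" where "v = (\<chi> u. vec_index w (enum_index u))"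
  have "w = jnf_vec v" using jnf_vec_surj[OF w(1)] by (simp add: v_def)
  with w(2,3) show "\<exists>v. v \<noteq> 0 \<and> cmat X *v v = \<mu> *s v"
    by (metis jnf_mat_mult_jnf_vec jnf_vec_smult jnf_vec_eq_iff jnf_vec_0)
next
  assume "\<exists>v. v \<noteq> 0 \<and> cmat X *v v = \<mu> *s v"
  then obtain v where "v \<noteq> 0" "cmat X *v v = \<mu> *s v" by auto
  then have "jnf_vec v \<noteq> 0\<^sub>v CARD('n)" "jnf_mat X *\<^sub>v jnf_vec v = \<mu> \<cdot>\<^sub>v jnf_vec v"
    by (metis jnf_vec_eq_iff jnf_vec_0, simp add: jnf_mat_mult_jnf_vec jnf_vec_smult)
  then show "eigenvalue (jnf_mat X) \<mu>"
    unfolding eigenvalue_def eigenvector_def using jnf_vec_carrier by auto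
qed

lemma poly_char_poly_jnf_mat:
  "poly (char_poly (jnf_mat (X::real^'n^'n))) z =
    (\<Sum>p | p permutes {0..<CARD('n)}. signof p *
       (\<Prod>i = 0..<CARD('n). (if i = p i then z else 0) - of_real (X $ enum_elem i $ enum_elem (p i))))"
proof -
  have "poly (char_poly (jnf_mat X)) z = det (- char_matrix (jnf_mat X) z)"
    by (rule char_poly_matrix[OF jnf_mat_carrier])
  also have "\<dots> = (\<Sum>p | p permutes {0..<CARD('n)}. signof p *
       (\<Prod>i = 0..<CARD('n). (- char_matrix (jnf_mat X) z) $$ (i, p i)))"
    by (rule det_def') (simp add: char_matrix_def jnf_mat_def)
  also have "\<dots> = (\<Sum>p | p permutes {0..<CARD('n)}. signof p *
       (\<Prod>i = 0..<CARD('n). (if i = p i then z else 0) - of_real (X $ enum_elem i $ enum_elem (p i))))"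
  proof (intro sum.cong refl arg_cong[where f="\<lambda>x. _ * x"] prod.cong)
    fix p i assume p: "p \<in> {p. p permutes {0..<CARD('n)}}" and i: "i \<in> {0..<CARD('n)}"
    then have "p i < CARD('n)" using permutes_in_image[of p "{0..<CARD('n)}" i] by auto
    with i show "(- char_matrix (jnf_mat X) z) $$ (i, p i)
        = (if i = p i then z else 0) - of_real (X $ enum_elem i $ enum_elem (p i))"
      by (simp add: char_matrix_def jnf_mat_def)
  qed
  finally show ?thesis .
qed

lemma continuous_on_poly_char_poly_jnf_mat:
  "continuous_on UNIV (\<lambda>X::real^'n^'n. poly (char_poly (jnf_mat X)) z)"
  unfolding poly_char_poly_jnf_mat by (intro continuous_intros)

section \<open>Uniform decay of matrix powers\<close>

lemma eigenvalue_norm_le_l1_norm: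
  fixes X :: "real^'n^'n"
  assumes v: "v \<noteq> 0" and eigen: "cmat X *v v = \<mu> *s v"
  shows "cmod \<mu> \<le> l1_norm X"
proof -
  obtain i where i: "\<And>j. cmod (v$j) \<le> cmod (v$i)"
  proof -
    have "Max (range (\<lambda>j. cmod (v$j))) \<in> range (\<lambda>j. cmod (v$j))"
      by (intro Max_in) auto
    then obtain i where i: "Max (range (\<lambda>j. cmod (v$j))) = cmod (v$i)" by (rule rangeE)
    have "cmod (v$j) \<le> cmod (v$i)" for j
      unfolding i[symmetric] by (rule Max_ge) auto
    then show thesis by (rule that)
  qed
  obtain j0 where "v$j0 \<noteq> 0"
    using v by (metis Finite_Cartesian_Product.vec_eq_iff zero_index)
  then have pos: "0 < cmod (v$i)"
    using i[of j0] by (meson zero_less_norm_iff order_less_le_trans)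
  have "\<mu> * v$i = (\<Sum>j\<in>UNIV. of_real (X$i$j) * v$j)"
    using arg_cong[where f="\<lambda>x. x$i", OF eigen] by (simp add: cmat_def matrix_vector_mult_def)
  then have "cmod \<mu> * cmod (v$i) = cmod (\<Sum>j\<in>UNIV. of_real (X$i$j) * v$j)"
    by (metis norm_mult)
  also have "\<dots> \<le> (\<Sum>j\<in>UNIV. \<bar>X$i$j\<bar> * cmod (v$i))"
    by (rule order_trans[OF norm_sum]) (auto simp: norm_mult intro!: sum_mono mult_left_mono i)
  also have "\<dots> \<le> l1_norm X * cmod (v$i)"
    unfolding sum_distrib_right[symmetric] by (intro mult_right_mono row_sum_le_l1_norm) auto
  finally show ?thesis using pos by simp
qed

lemma eigenvalue_norm_le_spec_rad:
  fixes X :: "real^'n^'n"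
  assumes "v \<noteq> 0" "cmat X *v v = \<mu> *s v"
  shows "cmod \<mu> \<le> spec_rad X"
  unfolding spec_rad_def
proof (rule cSup_upper)
  show "cmod \<mu> \<in> {cmod l |l. \<exists>v. v \<noteq> 0 \<and> cmat X *v v = l *s v}"
    using assms by blast
  show "bdd_above {cmod l |l. \<exists>v. v \<noteq> 0 \<and> cmat X *v v = l *s v}"
    by (rule bdd_aboveI[of _ "l1_norm X"]) (auto intro: eigenvalue_norm_le_l1_norm)
qed

lemma norm_poly_linear_factors_ge:
  assumes "\<And>a. a \<in> set as \<Longrightarrow> c \<le> cmod (z - a)" and "0 \<le> c"
  shows "c ^ length as \<le> cmod (poly (\<Prod>a\<leftarrow>as. [:-a, 1:]) z)"
  using assms
proof (induction as)
  case (Cons a as)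
  have "poly (\<Prod>a\<leftarrow>a # as. [:-a, 1:]) z = (z - a) * poly (\<Prod>a\<leftarrow>as. [:-a, 1:]) z"
    by (simp add: algebra_simps)
  moreover have "c * c ^ length as \<le> cmod (z - a) * cmod (poly (\<Prod>a\<leftarrow>as. [:-a, 1:]) z)"
    using Cons by (intro mult_mono) auto
  ultimately show ?case by (simp add: norm_mult)
qed simp

lemma norm_poly_char_poly_ge:
  fixes X :: "real^'n^'n"
  assumes "spec_rad X \<le> \<rho>" and "\<rho> \<le> r" and "r \<le> cmod z"
  shows "(r - \<rho>) ^ CARD('n) \<le> cmod (poly (char_poly (jnf_mat X)) z)"
proof -
  obtain as where as: "char_poly (jnf_mat X) = (\<Prod>a\<leftarrow>as. [:- a, 1:])" "length as = CARD('n)"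
    using char_poly_factorized[OF jnf_mat_carrier] by blast
  have "r - \<rho> \<le> cmod (z - a)" if "a \<in> set as" for a
  proof -
    have "poly (char_poly (jnf_mat X)) a = 0"
      unfolding as(1) using that by (rule linear_poly_root)
    then have "eigenvalue (jnf_mat X) a"
      using eigenvalue_root_char_poly[OF jnf_mat_carrier] by blast
    then have "cmod a \<le> \<rho>"
      using eigenvalue_jnf_mat_iff eigenvalue_norm_le_spec_rad assms(1) by (metis order_trans)
    then show ?thesis using norm_triangle_ineq2[of z a] assms(3) by linarith
  qed
  then show ?thesis using norm_poly_linear_factors_ge[of as "r - \<rho>" z] as assms(2) by auto
qed

lemma matpow_bounded:
  fixes X :: "real^'n^'n"
  assumes "\<And>\<mu> v. v \<noteq> 0 \<Longrightarrow> cmat X *v v = \<mu> *s v \<Longrightarrow> cmod \<mu> < 1"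
  shows "\<exists>C. \<forall>k. l1_norm (matpow X k) \<le> C"
proof -
  obtain \<mu> where "\<mu> \<in> spectrum (jnf_mat X)" "spectral_radius (jnf_mat X) = cmod \<mu>"
    using spectral_radius_mem_max(1)[OF jnf_mat_carrier, of X] by auto
  then have "spectral_radius (jnf_mat X) < 1"
    using assms by (auto simp: spectrum_def eigenvalue_jnf_mat_iff)
  then obtain c where c: "\<And>k. norm_bound (jnf_mat X ^\<^sub>m k) c"
    using spectral_radius_jnf_norm_bound_less_1_upper_triangular[OF jnf_mat_carrier] by blast
  have "\<bar>matpow X k $ u $ u'\<bar> \<le> c" for k u u'
  proof -
    have "\<bar>matpow X k $ u $ u'\<bar> \<le> cmod ((jnf_mat X ^\<^sub>m k) $$ (enum_index u, enum_index u'))"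
      unfolding matpow_entry_eq_jnf by (rule abs_Re_le_cmod)
    also have "\<dots> \<le> c"
      using c[of k] enum_index_less[of u] enum_index_less[of u']
      unfolding norm_bound_def by (simp add: pow_mat_dim_square[OF jnf_mat_carrier])
    finally show ?thesis .
  qed
  then show ?thesis by (metis l1_norm_le_entry_bound)
qed

lemma matpow_l1_norm_eventually_small:
  fixes X :: "real^'n^'n"
  assumes r: "0 < r" "r < 1"
    and no_roots: "\<And>z. r \<le> cmod z \<Longrightarrow> poly (char_poly (jnf_mat X)) z \<noteq> 0"
  shows "\<exists>k\<ge>1. l1_norm (matpow X k) < 1/2"
proof -
  define Y where "Y = (1/r) *\<^sub>R X"
  have X: "X = r *\<^sub>R Y" using r by (simp add: Y_def)
  have "cmod \<mu> < 1" if v: "v \<noteq> 0" "cmat Y *v v = \<mu> *s v" for \<mu> v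
  proof -
    have "cmat X *v v = of_real r *s (cmat Y *v v)"
      by (simp add: X cmat_def matrix_vector_mult_def
          Finite_Cartesian_Product.vec_eq_iff sum_distrib_left mult.assoc)
    also have "\<dots> = (of_real r * \<mu>) *s v"
      using v(2) by (simp add: vector_smult_assoc)
    finally have "cmat X *v v = (of_real r * \<mu>) *s v" .
    then have "poly (char_poly (jnf_mat X)) (of_real r * \<mu>) = 0"
      using v(1) eigenvalue_jnf_mat_iff eigenvalue_root_char_poly[OF jnf_mat_carrier] by blast
    then have "r * cmod \<mu> < r * 1" using no_roots r by (force simp: norm_mult)
    then show ?thesis using r by simp
  qed
  then obtain C where C: "\<And>k. l1_norm (matpow Y k) \<le> C" using matpow_bounded by blast
  have C0: "0 \<le> C" using C[of 0] l1_norm_nonneg order_trans by blast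
  obtain k where k: "r ^ k < 1 / (2 * (C + 1))"
    using real_arch_pow_inv[of "1 / (2 * (C + 1))" r] C0 r by auto
  have "l1_norm (matpow X (Suc k)) = r ^ Suc k * l1_norm (matpow Y (Suc k))"
    unfolding X matpow_scaleR l1_norm_scaleR using r by simp
  also have "\<dots> \<le> r ^ k * (C + 1)"
    using r C[of "Suc k"] by (intro mult_mono power_decreasing l1_norm_nonneg) auto
  also have "\<dots> < 1/2"
    using k C0 by (simp add: field_simps)
  finally show ?thesis by (intro exI[of _ "Suc k"]) auto
qed

lemma continuous_on_l1_norm_matpow: "continuous_on UNIV (\<lambda>X::real^'n^'n. l1_norm (matpow X k))"
  unfolding l1_norm_def by (intro continuous_intros continuous_on_matpow)

lemma matpow_l1_norm_uniformly_small:
  fixes S :: "(real^'n^'n) set"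
  assumes "compact S" and "\<And>X. X \<in> S \<Longrightarrow> \<exists>k\<ge>1. l1_norm (matpow X k) < 1/2"
  shows "\<exists>N. \<forall>X\<in>S. l1_norm (matpow X N) \<le> 1/2"
proof -
  obtain kf where kf: "\<And>X. X \<in> S \<Longrightarrow> 1 \<le> kf X \<and> l1_norm (matpow X (kf X)) < 1/2"
    using assms(2) by metis
  have "open {Y. l1_norm (matpow Y (kf X)) < 1/2}" for X
    by (intro open_Collect_less continuous_on_l1_norm_matpow continuous_intros)
  moreover have "S \<subseteq> (\<Union>X\<in>S. {Y. l1_norm (matpow Y (kf X)) < 1/2})"
    using kf by auto
  ultimately obtain F where F: "F \<subseteq> S" "finite F"
      "S \<subseteq> (\<Union>X\<in>F. {Y. l1_norm (matpow Y (kf X)) < 1/2})"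
    by (rule compactE_image[OF assms(1)])
  text \<open>Every exponent of the finite subcover divides their product.\<close>
  have "l1_norm (matpow Y (\<Prod>X\<in>F. kf X)) \<le> 1/2" if "Y \<in> S" for Y
  proof -
    obtain X where X: "X \<in> F" "l1_norm (matpow Y (kf X)) < 1/2" using F(3) \<open>Y \<in> S\<close> by blast
    obtain q where q: "(\<Prod>X\<in>F. kf X) = kf X * q"
      using X(1) F(2) by (metis dvd_prodI dvdE)
    have "0 < (\<Prod>X\<in>F. kf X)"
      using F(1) kf by (intro prod_pos) (metis subsetD not_one_le_zero neq0_conv)
    then have q1: "1 \<le> q" using q by (cases q) auto
    have "l1_norm (matpow Y (\<Prod>X\<in>F. kf X)) = l1_norm (matpow (matpow Y (kf X)) q)"
      by (simp add: q matpow_mult)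
    also have "\<dots> \<le> l1_norm (matpow Y (kf X)) ^ q" by (rule l1_norm_matpow_le[OF q1])
    also have "\<dots> \<le> (1/2) ^ q" using X(2) by (intro power_mono l1_norm_nonneg) auto
    also have "\<dots> \<le> 1/2" using power_decreasing[OF q1, of "1/2::real"] by simp
    finally show ?thesis .
  qed
  then show ?thesis by blast
qed

lemma compact_char_poly_margin:
  "compact {X::real^'n^'n. l1_norm X \<le> c \<and>
      (\<forall>z. r \<le> cmod z \<longrightarrow> e \<le> cmod (poly (char_poly (jnf_mat X)) z))}" (is "compact ?S")
proof -
  have "?S = {X. l1_norm X \<le> c} \<inter>
      (\<Inter>z\<in>{z. r \<le> cmod z}. {X. e \<le> cmod (poly (char_poly (jnf_mat X)) z)})"
    by auto
  moreover have "closed {X::real^'n^'n. l1_norm X \<le> c}"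
    unfolding l1_norm_def by (intro closed_Collect_le continuous_intros)
  moreover have "closed {X::real^'n^'n. e \<le> cmod (poly (char_poly (jnf_mat X)) z)}" for z
    by (intro closed_Collect_le continuous_intros continuous_on_poly_char_poly_jnf_mat)
  ultimately have "closed ?S" by (auto intro!: closed_Int closed_INT)
  moreover have "?S \<subseteq> cball 0 c"
  proof
    fix X assume "X \<in> ?S"
    then have "norm X \<le> c" using norm_le_l1_norm[of X] by auto
    then show "X \<in> cball 0 c" by simp
  qed
  ultimately show ?thesis
    by (simp add: compact_eq_bounded_closed bounded_subset[OF bounded_cball])
qed

lemma matpow_l1_norm_uniformly_small_spec_rad:
  assumes "0 \<le> \<rho>" and "\<rho> < 1"
  shows "\<exists>N. \<forall>L::real^'n^'n. opnorm L \<le> c \<and> spec_rad L \<le> \<rho> \<longrightarrow> l1_norm (matpow L N) \<le> 1/2"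
proof -
  define r where "r = (1 + \<rho>) / 2"
  have r: "\<rho> < r" "0 < r" "r < 1" using assms by (simp_all add: r_def)
  define S where "S = {X::real^'n^'n. l1_norm X \<le> real CARD('n) * real CARD('n) * c \<and>
      (\<forall>z. r \<le> cmod z \<longrightarrow> (r - \<rho>) ^ CARD('n) \<le> cmod (poly (char_poly (jnf_mat X)) z))}"
  have "\<exists>k\<ge>1. l1_norm (matpow X k) < 1/2" if "X \<in> S" for X
  proof (rule matpow_l1_norm_eventually_small[OF r(2,3)])
    fix z :: complex assume "r \<le> cmod z"
    have "0 < (r - \<rho>) ^ CARD('n)" using r(1) by simp
    also have "\<dots> \<le> cmod (poly (char_poly (jnf_mat X)) z)"
      using that \<open>r \<le> cmod z\<close> by (auto simp: S_def)
    finally show "poly (char_poly (jnf_mat X)) z \<noteq> 0" by auto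
  qed
  moreover have "compact S"
    unfolding S_def by (rule compact_char_poly_margin)
  ultimately obtain N where N: "\<forall>X\<in>S. l1_norm (matpow X N) \<le> 1/2"
    using matpow_l1_norm_uniformly_small by blast
  have "L \<in> S" if "opnorm L \<le> c" "spec_rad L \<le> \<rho>" for L :: "real^'n^'n"
    using l1_norm_le_of_opnorm_le[OF that(1)] norm_poly_char_poly_ge[OF that(2) less_imp_le[OF r(1)]]
    unfolding S_def by auto
  then show ?thesis using N by blast
qed

section \<open>Lipschitz bounds for \<open>P_K\<close> and \<open>theta\<close>\<close>

lemma lyapunov_perturbation:
  fixes L :: "real^'n^'n"
  assumes N: "l1_norm (matpow L N) \<le> 1/2" and L: "l1_norm L \<le> c"
    and P: "P = E + transpose L ** P ** L" and P': "P' = E' + transpose L' ** P' ** L'"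
  shows "l1_norm (P - P') \<le> lyapunov_gain CARD('n) N c
      * (l1_norm (E - E') + l1_norm (L - L') * l1_norm P' * (l1_norm L + l1_norm L'))"
proof -
  define F where "F = E - E' + transpose (L - L') ** P' ** L + transpose L' ** P' ** (L - L')"
  have "P - P' = (E + transpose L ** P ** L) - (E' + transpose L' ** P' ** L')"
    using P P' by (rule arg_cong2[where f=minus])
  also have "\<dots> = F + transpose L ** (P - P') ** L"
    by (simp add: F_def matrix_diff_ldistrib matrix_diff_rdistrib transpose_diff)
  finally have "l1_norm (P - P') \<le> lyapunov_gain CARD('n) N c * l1_norm F"
    by (rule lyapunov_l1_bound_gain[OF N L])
  also have "l1_norm F \<le> l1_norm (E - E') + l1_norm (L - L') * l1_norm P' * (l1_norm L + l1_norm L')"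
  proof -
    have "l1_norm F \<le> l1_norm (E - E') + l1_norm (L - L') * l1_norm P' * l1_norm L
        + l1_norm L' * l1_norm P' * l1_norm (L - L')"
      unfolding F_def
      using l1_norm_triangle[of "E - E' + transpose (L - L') ** P' ** L" "transpose L' ** P' ** (L - L')"]
        l1_norm_triangle[of "E - E'" "transpose (L - L') ** P' ** L"]
        l1_norm_congruence_le[of "L - L'" P' L] l1_norm_congruence_le[of L' P' "L - L'"]
      by linarith
    then show ?thesis by (simp add: algebra_simps)
  qed
  then have "lyapunov_gain CARD('n) N c * l1_norm F \<le> lyapunov_gain CARD('n) N c
      * (l1_norm (E - E') + l1_norm (L - L') * l1_norm P' * (l1_norm L + l1_norm L'))"
    by (intro mult_left_mono lyapunov_gain_nonneg)
  finally show ?thesis .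
qed

lemma P_K_l1_bound:
  fixes A :: "real^'d^'d"
  assumes N: "l1_norm (matpow (A - B ** K) N) \<le> 1/2" and L: "l1_norm (A - B ** K) \<le> c"
  shows "l1_norm (P_K A B Q R K)
      \<le> lyapunov_gain CARD('d) N c * (l1_norm Q + l1_norm K ^ 2 * l1_norm R)"
proof -
  have "l1_norm (P_K A B Q R K) \<le> lyapunov_gain CARD('d) N c * l1_norm (Q + transpose K ** R ** K)"
    by (rule lyapunov_l1_bound_gain[OF N L P_K_fixpoint[OF N]])
  also have "l1_norm (Q + transpose K ** R ** K) \<le> l1_norm Q + l1_norm K ^ 2 * l1_norm R"
    using l1_norm_triangle[of Q "transpose K ** R ** K"] l1_norm_congruence_le[of K R K]
    by (simp add: power2_eq_square mult.commute mult.left_commute)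
  then have "lyapunov_gain CARD('d) N c * l1_norm (Q + transpose K ** R ** K)
      \<le> lyapunov_gain CARD('d) N c * (l1_norm Q + l1_norm K ^ 2 * l1_norm R)"
    by (intro mult_left_mono lyapunov_gain_nonneg)
  finally show ?thesis .
qed

lemma P_K_l1_diff_le:
  fixes A :: "real^'d^'d"
  assumes N: "l1_norm (matpow (A - B ** K) N) \<le> 1/2" and L: "l1_norm (A - B ** K) \<le> c"
    and N': "l1_norm (matpow (A - B ** K') N') \<le> 1/2"
  shows "l1_norm (P_K A B Q R K - P_K A B Q R K') \<le> lyapunov_gain CARD('d) N c
      * (l1_norm R * (l1_norm K + l1_norm K') + l1_norm B * l1_norm (P_K A B Q R K')
          * (l1_norm (A - B ** K) + l1_norm (A - B ** K'))) * l1_norm (K - K')"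
proof -
  define \<delta> where "\<delta> = l1_norm (K - K')"
  have E_diff: "(Q + transpose K ** R ** K) - (Q + transpose K' ** R ** K')
      = transpose (K - K') ** R ** K + transpose K' ** R ** (K - K')"
    by (simp add: matrix_diff_ldistrib matrix_diff_rdistrib transpose_diff)
  have "l1_norm ((Q + transpose K ** R ** K) - (Q + transpose K' ** R ** K'))
      \<le> l1_norm (K - K') * l1_norm R * l1_norm K + l1_norm K' * l1_norm R * l1_norm (K - K')"
    unfolding E_diff
    using l1_norm_triangle[of "transpose (K - K') ** R ** K" "transpose K' ** R ** (K - K')"]
      l1_norm_congruence_le[of "K - K'" R K] l1_norm_congruence_le[of K' R "K - K'"]
    by linarith
  moreover have "l1_norm (K - K') * l1_norm R * l1_norm K + l1_norm K' * l1_norm R * l1_norm (K - K')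
      = l1_norm R * (l1_norm K + l1_norm K') * \<delta>"
    by (simp add: \<delta>_def algebra_simps)
  ultimately have E: "l1_norm ((Q + transpose K ** R ** K) - (Q + transpose K' ** R ** K'))
      \<le> l1_norm R * (l1_norm K + l1_norm K') * \<delta>"
    by linarith
  have "(A - B ** K) - (A - B ** K') = B ** (K' - K)"
    by (simp add: matrix_diff_ldistrib)
  then have L_diff: "l1_norm ((A - B ** K) - (A - B ** K')) \<le> l1_norm B * \<delta>"
    using l1_norm_mult_le[of B "K' - K"] l1_norm_minus[of "K - K'"] by (simp add: \<delta>_def)
  have "l1_norm (P_K A B Q R K - P_K A B Q R K') \<le> lyapunov_gain CARD('d) N c
      * (l1_norm R * (l1_norm K + l1_norm K') * \<delta> + l1_norm B * \<delta> * l1_norm (P_K A B Q R K')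
          * (l1_norm (A - B ** K) + l1_norm (A - B ** K')))"
    by (rule order_trans[OF lyapunov_perturbation[OF N L P_K_fixpoint[OF N] P_K_fixpoint[OF N']]])
      (intro mult_left_mono add_mono E mult_right_mono L_diff l1_norm_nonneg add_nonneg_nonneg
        lyapunov_gain_nonneg)
  then show ?thesis by (simp add: \<delta>_def algebra_simps)
qed

lemma sum_UNIV_Plus:
  "(\<Sum>i\<in>(UNIV::('a::finite + 'b::finite) set). g i) = (\<Sum>a\<in>UNIV. g (Inl a)) + (\<Sum>b\<in>UNIV. g (Inr b))"
  by (subst UNIV_Plus_UNIV[symmetric], subst sum.Plus) (auto simp: comp_def)

lemma l1_norm_theta_diff_le:
  "l1_norm (theta A B Q R K - theta A B Q R K')
    \<le> (l1_norm A + l1_norm B)^2 * l1_norm (P_K A B Q R K - P_K A B Q R K')"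
proof -
  define D where "D = P_K A B Q R K - P_K A B Q R K'"
  have "theta A B Q R K - theta A B Q R K' = (\<chi> i j. case i of
        Inl a \<Rightarrow> (case j of Inl b \<Rightarrow> (transpose A ** D ** A) $ a $ b | Inr b \<Rightarrow> (transpose A ** D ** B) $ a $ b)
      | Inr a \<Rightarrow> (case j of Inl b \<Rightarrow> (transpose B ** D ** A) $ a $ b | Inr b \<Rightarrow> (transpose B ** D ** B) $ a $ b))"
    unfolding Finite_Cartesian_Product.vec_eq_iff
    by (auto simp: theta_def Let_def D_def matrix_diff_ldistrib matrix_diff_rdistrib split: sum.split)
  then have "l1_norm (theta A B Q R K - theta A B Q R K') =
      l1_norm (transpose A ** D ** A) + l1_norm (transpose A ** D ** B)
      + l1_norm (transpose B ** D ** A) + l1_norm (transpose B ** D ** B)"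
    unfolding l1_norm_def sum_UNIV_Plus by (simp add: sum.distrib)
  also have "\<dots> \<le> (l1_norm A + l1_norm B)^2 * l1_norm D"
    using l1_norm_congruence_le[of A D A] l1_norm_congruence_le[of A D B]
      l1_norm_congruence_le[of B D A] l1_norm_congruence_le[of B D B]
    by (simp add: power2_eq_square algebra_simps)
  finally show ?thesis unfolding D_def .
qed

definition admissible_gain ::
    "real^'d^'d \<Rightarrow> real^'k^'d \<Rightarrow> real \<Rightarrow> real \<Rightarrow> real \<Rightarrow> real^'d^'k \<Rightarrow> bool" where
  "admissible_gain A B cA cK rho K \<longleftrightarrow>
    opnorm K \<le> cK \<and> opnorm (A - B ** K) \<le> cA \<and> spec_rad (A - B ** K) \<le> rho"

lemma P_K_l1_lipschitz:
  fixes A :: "real^'d^'d" and B :: "real^'k^'d"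
  assumes "0 \<le> rho" and "rho < 1" and "0 \<le> cA" and "0 \<le> cK"
  shows "\<exists>C\<ge>0. \<forall>K K'. admissible_gain A B cA cK rho K \<longrightarrow> admissible_gain A B cA cK rho K' \<longrightarrow>
      l1_norm (P_K A B Q R K - P_K A B Q R K') \<le> C * l1_norm (K - K')"
proof -
  obtain N where N: "\<And>L::real^'d^'d. opnorm L \<le> cA \<Longrightarrow> spec_rad L \<le> rho
      \<Longrightarrow> l1_norm (matpow L N) \<le> 1/2"
    using matpow_l1_norm_uniformly_small_spec_rad[OF assms(1,2)] by blast
  define cL where "cL = real CARD('d) * real CARD('d) * cA"
  define cKK where "cKK = real CARD('k) * real CARD('d) * cK"
  define G where "G = lyapunov_gain CARD('d) N cL"
  define cP where "cP = G * (l1_norm Q + cKK^2 * l1_norm R)"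
  have nonneg: "0 \<le> cL" "0 \<le> cKK" "0 \<le> G" "0 \<le> cP"
    using assms(3,4) by (auto simp: cL_def cKK_def G_def cP_def lyapunov_gain_nonneg
        intro!: mult_nonneg_nonneg add_nonneg_nonneg l1_norm_nonneg)
  have bounds: "l1_norm (matpow (A - B ** K) N) \<le> 1/2 \<and> l1_norm K \<le> cKK \<and>
      l1_norm (A - B ** K) \<le> cL \<and> l1_norm (P_K A B Q R K) \<le> cP"
    if "admissible_gain A B cA cK rho K" for K
  proof -
    have N_K: "l1_norm (matpow (A - B ** K) N) \<le> 1/2"
      using N that unfolding admissible_gain_def by blast
    have K: "l1_norm K \<le> cKK" and L: "l1_norm (A - B ** K) \<le> cL"
      using l1_norm_le_of_opnorm_le that by (auto simp: admissible_gain_def cKK_def cL_def)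
    have "l1_norm (P_K A B Q R K) \<le> G * (l1_norm Q + l1_norm K ^ 2 * l1_norm R)"
      unfolding G_def by (rule P_K_l1_bound[OF N_K L])
    also have "\<dots> \<le> cP"
      unfolding cP_def using K nonneg
      by (intro mult_left_mono add_left_mono mult_right_mono power_mono l1_norm_nonneg) auto
    finally show ?thesis using N_K K L by blast
  qed
  define C where "C = G * (l1_norm R * (cKK + cKK) + l1_norm B * cP * (cL + cL))"
  have "l1_norm (P_K A B Q R K - P_K A B Q R K') \<le> C * l1_norm (K - K')"
    if "admissible_gain A B cA cK rho K" "admissible_gain A B cA cK rho K'" for K K'
  proof -
    note K = bounds[OF that(1)] and K' = bounds[OF that(2)]
    have "l1_norm R * (l1_norm K + l1_norm K') + l1_norm B * l1_norm (P_K A B Q R K')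
          * (l1_norm (A - B ** K) + l1_norm (A - B ** K'))
        \<le> l1_norm R * (cKK + cKK) + l1_norm B * cP * (cL + cL)"
      using K K' nonneg by (intro add_mono mult_left_mono mult_mono)
        (auto intro!: add_nonneg_nonneg mult_nonneg_nonneg l1_norm_nonneg)
    then show ?thesis
      unfolding C_def G_def
      by (intro order_trans[OF P_K_l1_diff_le[of A B K N cL K' N Q R]] mult_right_mono mult_left_mono)
        (use K K' in \<open>auto intro: l1_norm_nonneg lyapunov_gain_nonneg\<close>)
  qed
  moreover have "0 \<le> C"
    using nonneg by (auto simp: C_def intro!: mult_nonneg_nonneg add_nonneg_nonneg l1_norm_nonneg)
  ultimately show ?thesis by blast
qed

theorem lemma4:
  fixes A :: "real^'d^'d" and B :: "real^'k^'d" and Q :: "real^'d^'d" and R :: "real^'k^'k"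
    and rho cA cK :: real
  assumes "sym_pd Q" and "sym_pd R"
    and "0 < rho" and "rho < 1" and "0 < cA" and "0 < cK"
  shows "\<exists>c1>0. \<forall>(K::real^'d^'k) (K'::real^'d^'k).
           opnorm K \<le> cK \<and> opnorm K' \<le> cK \<and>
           opnorm (A - B ** K) \<le> cA \<and> opnorm (A - B ** K') \<le> cA \<and>
           spec_rad (A - B ** K) \<le> rho \<and> spec_rad (A - B ** K') \<le> rho \<longrightarrow>
           frob (theta A B Q R K - theta A B Q R K') \<le> c1 * frob (K - K')"
proof -
  obtain C where "0 \<le> C" and C: "\<And>K K'. admissible_gain A B cA cK rho K
      \<Longrightarrow> admissible_gain A B cA cK rho K'
      \<Longrightarrow> l1_norm (P_K A B Q R K - P_K A B Q R K') \<le> C * l1_norm (K - K')"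
    using P_K_l1_lipschitz[of rho cA cK A B Q R] assms(3-6) by auto
  define c1 where "c1 = (l1_norm A + l1_norm B)^2 * C * (real CARD('k) * real CARD('d)) + 1"
  have "0 \<le> (l1_norm A + l1_norm B)^2 * C * (real CARD('k) * real CARD('d))"
    using \<open>0 \<le> C\<close> by (intro mult_nonneg_nonneg) auto
  then have "0 < c1" by (simp add: c1_def)
  moreover have "frob (theta A B Q R K - theta A B Q R K') \<le> c1 * frob (K - K')"
    if "admissible_gain A B cA cK rho K" "admissible_gain A B cA cK rho K'" for K K' :: "real^'d^'k"
  proof -
    have "frob (theta A B Q R K - theta A B Q R K')
        \<le> (l1_norm A + l1_norm B)^2 * l1_norm (P_K A B Q R K - P_K A B Q R K')"
      using order_trans[OF norm_le_l1_norm l1_norm_theta_diff_le] by (simp add: frob_eq_norm)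
    also have "\<dots> \<le> (l1_norm A + l1_norm B)^2 * (C * (real CARD('k) * real CARD('d) * frob (K - K')))"
      using order_trans[OF C[OF that] mult_left_mono[OF l1_norm_le_norm \<open>0 \<le> C\<close>]]
      by (intro mult_left_mono) (simp_all add: frob_eq_norm)
    also have "\<dots> \<le> c1 * frob (K - K')"
      by (simp add: c1_def frob_eq_norm algebra_simps)
    finally show ?thesis .
  qed
  ultimately show ?thesis unfolding admissible_gain_def by blast
qed

end
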